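(* Let $(\mathfrak{g}_0,[\cdot,\cdot]_0,\langle\cdot,\cdot\rangle_0)$ be a Euclidean Lie algebra, let $\mu\in\mathbb{R}$, $b\in\mathfrak{g}_0$, and let $K,D:\mathfrak{g}_0\to\mathfrak{g}_0$ be endomorphisms with $K$ skew-symmetric. Let $\mathfrak{g}=\mathbb{R}e\oplus\mathfrak{g}_0\oplus\mathbb{R}\bar e$ with the Lorentzian form $\langle\cdot,\cdot\rangle$ given by $\langle e,e\rangle=\langle\bar e,\bar e\rangle=0$, $\langle e,\bar e\rangle=1$, $\mathfrak{g}_0\perp\{e,\bar e\}$, $\langle\cdot,\cdot\rangle|_{\mathfrak{g}_0}=\langle\cdot,\cdot\rangle_0$, and the skew-symmetric bracket determined by $$[\bar e,e]=\mu e,\quad [\bar e,u]=D(u)+\langle b,u\rangle_0\,e,\quad [u,v]=[u,v]_0+\langle K(u),v\rangle_0\,e,\qquad [e,u]=0,$$ for $u,v\in\mathfrak{g}_0$. Let $\mathrm{ad}^0$ denote the adjoint representation of $\mathfrak{g}_0$. (1) Let $\omega(u,v)=\langle K(u),v\rangle_0$. Then $(\mathfrak{g},[\cdot,\cdot])$ is a Lie algebra if and only if $D$ is a derivation of $\mathfrak{g}_0$, $\omega$ is a $2$-cocycle of $\mathfrak{g}_0$ with values in $\mathbb{R}$ (trivial module), and $KD+D^*K=\mu K+J^0_b$, where $J^0_u(v)=(\mathrm{ad}^0_v)^*(u)$ for $u,v\in\mathfrak{g}_0$. (2) Assume $\mathfrak{g}$ is a Lie algebra, and let $H\in\mathfrak{g}$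 and $H^0\in\mathfrak{g}_0$ be defined by $\mathrm{tr}(\mathrm{ad}_u)=\langle H,u\rangle$ for all $u\in\mathfrak{g}$ and $\mathrm{tr}(\mathrm{ad}^0_v)=\langle H^0,v\rangle_0$ for all $v\in\mathfrak{g}_0$. Then $H=(\mu+\mathrm{tr}(D))e+H^0$. In particular $\mathfrak{g}$ is unimodular if and only if $\mathfrak{g}_0$ is unimodular and $\mathrm{tr}(D)=-\mu$.
   Context: A Euclidean Lie algebra is a finite-dimensional real Lie algebra with a positive definite inner product. Adjoints $F^*$ are taken with respect to $\langle\cdot,\cdot\rangle_0$. Unimodular means all $\mathrm{ad}_u$ are traceless. The bracket not listed ($[e,e]$, $[e,u]$) is zero; the bracket with $e$ is as given. *)

theory Defs
  imports "HOL-Analysis.Analysis"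
begin

definition lie_algebra :: "('v::real_vector \<Rightarrow> 'v \<Rightarrow> 'v) \<Rightarrow> bool" where
  "lie_algebra br \<longleftrightarrow> bilinear br \<and> (\<forall>x. br x x = 0) \<and>
     (\<forall>x y z. br x (br y z) + br y (br z x) + br z (br x y) = 0)"

definition trace :: "('v::euclidean_space \<Rightarrow> 'v) \<Rightarrow> real" where
  "trace f = (\<Sum>i\<in>Basis. inner (f i) i)"

definition derivation :: "('v::real_vector \<Rightarrow> 'v \<Rightarrow> 'v) \<Rightarrow> ('v \<Rightarrow> 'v) \<Rightarrow> bool" where
  "derivation br D \<longleftrightarrow> linear D \<and> (\<forall>u v. D (br u v) = br (D u) v + br u (D v))"

definition cocycle2 :: "('v::real_vector \<Rightarrow> 'v \<Rightarrow> 'v) \<Rightarrow> ('v \<Rightarrow> 'v \<Rightarrow> real) \<Rightarrow> bool" where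
  "cocycle2 br \<omega> \<longleftrightarrow> bilinear \<omega> \<and> (\<forall>u. \<omega> u u = 0) \<and>
     (\<forall>u v w. \<omega> (br u v) w + \<omega> (br v w) u + \<omega> (br w u) v = 0)"

definition Jop :: "('v::real_inner \<Rightarrow> 'v \<Rightarrow> 'v) \<Rightarrow> 'v \<Rightarrow> 'v \<Rightarrow> 'v" where
  "Jop br u v = adjoint (br v) u"

definition unimodular :: "('v::euclidean_space \<Rightarrow> 'v \<Rightarrow> 'v) \<Rightarrow> bool" where
  "unimodular br \<longleftrightarrow> (\<forall>u. trace (br u) = 0)"

text \<open>The extension \<open>g = \<real>e \<oplus> g\<^sub>0 \<oplus> \<real>\<bar>e\<close>: the triple \<open>(x, u, y)\<close> stands for
\<open>x e + u + y \<bar>e\<close>.\<close>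
definition lorentz_inner :: "real \<times> 'v::real_inner \<times> real \<Rightarrow> real \<times> 'v \<times> real \<Rightarrow> real" where
  "lorentz_inner p q = (case p of (x1, u1, y1) \<Rightarrow> case q of (x2, u2, y2) \<Rightarrow>
      x1 * y2 + y1 * x2 + inner u1 u2)"

definition ext_bracket ::
  "('v::real_inner \<Rightarrow> 'v \<Rightarrow> 'v) \<Rightarrow> real \<Rightarrow> 'v \<Rightarrow> ('v \<Rightarrow> 'v) \<Rightarrow> ('v \<Rightarrow> 'v)
   \<Rightarrow> real \<times> 'v \<times> real \<Rightarrow> real \<times> 'v \<times> real \<Rightarrow> real \<times> 'v \<times> real" where
  "ext_bracket br0 \<mu> b K D p q = (case p of (x1, u1, y1) \<Rightarrow> case q of (x2, u2, y2) \<Rightarrow>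
     ( \<mu> * (y1 * x2 - x1 * y2) + inner (K u1) u2 + y1 * inner b u2 - y2 * inner b u1,
       br0 u1 u2 + y1 *\<^sub>R D u2 - y2 *\<^sub>R D u1,
       0))"

end

theory Submission
  imports Defs
begin

text \<open>Write elements of \<open>g\<close> as \<open>x e + u + y \<bar>e\<close>. The Jacobiator of three such elements
has no \<open>\<bar>e\<close>-component; its \<open>g\<^sub>0\<close>-component is the Jacobiator of \<open>g\<^sub>0\<close> plus the \<open>y\<^sub>i\<close>-weighted
failures of \<open>D\<close> to be a derivation, and its \<open>e\<close>-component is the cyclic sum of
\<open>\<langle>K u\<^sub>1, [u\<^sub>2,u\<^sub>3]\<^sub>0\<rangle>\<^sub>0\<close> plus the \<open>y\<^sub>i\<close>-weighted values of the bilinear form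
\<open>\<langle>(\<mu>K + J\<^sup>0\<^sub>b - KD - D\<^sup>*K) v, w\<rangle>\<^sub>0\<close>. Evaluating on three vectors of \<open>g\<^sub>0\<close>, and on \<open>\<bar>e\<close> together
with two vectors of \<open>g\<^sub>0\<close>, separates these terms, which gives (1).
For (2), \<open>ad\<^bsub>x e + u + y \<bar>e\<^esub>\<close> is block triangular with diagonal blocks \<open>\<mu> y\<close>,
\<open>ad\<^sup>0\<^sub>u + y D\<close> and \<open>0\<close>, so its trace is \<open>\<mu> y + tr ad\<^sup>0\<^sub>u + y tr D\<close>; pairing with the
Lorentzian form, in which \<open>e\<close> and \<open>\<bar>e\<close> are dual to each other, yields \<open>H\<close>.\<close>

definition jacobiator :: "('v::real_vector \<Rightarrow> 'v \<Rightarrow> 'v) \<Rightarrow> 'v \<Rightarrow> 'v \<Rightarrow> 'v \<Rightarrow> 'v" where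
  "jacobiator br x y z = br x (br y z) + br y (br z x) + br z (br x y)"

lemma lie_algebra_iff_jacobiator:
  "lie_algebra br \<longleftrightarrow> bilinear br \<and> (\<forall>x. br x x = 0) \<and> (\<forall>x y z. jacobiator br x y z = 0)"
  by (simp add: lie_algebra_def jacobiator_def)

lemma lie_algebra_anticommute:
  assumes "lie_algebra br"
  shows "br y x = - br x y"
proof -
  have B: "bilinear br" and A: "\<And>x. br x x = 0"
    using assms by (auto simp: lie_algebra_def)
  have "br (x + y) (x + y) = br x x + br x y + (br y x + br y y)"
    by (simp only: bilinear_ladd[OF B] bilinear_radd[OF B] ac_simps)
  then have "br x y + br y x = 0"
    using A by simp
  then show ?thesis
    by (simp add: eq_neg_iff_add_eq_0 add.commute)
qed

lemma sum_Basis_prod: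
  fixes f :: "'a::euclidean_space \<times> 'b::euclidean_space \<Rightarrow> 'c::comm_monoid_add"
  shows "sum f Basis = (\<Sum>i\<in>Basis. f (i, 0)) + (\<Sum>i\<in>Basis. f (0, i))"
proof -
  have "inj_on (\<lambda>u. (u::'a, 0::'b)) Basis" "inj_on (\<lambda>u. (0::'a, u::'b)) Basis"
    by (auto intro!: inj_onI)
  then show ?thesis
    unfolding Basis_prod_def
    by (subst sum.union_disjoint) (auto simp: sum.reindex)
qed

lemma trace_ext_bracket:
  fixes br0 :: "'a::euclidean_space \<Rightarrow> 'a \<Rightarrow> 'a"
  shows "trace (ext_bracket br0 \<mu> b K D (x, u, y)) = \<mu> * y + trace (br0 u) + y * trace D"
proof -
  have "trace (ext_bracket br0 \<mu> b K D (x, u, y))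
      = \<mu> * y + (\<Sum>k\<in>Basis. inner (br0 u k + y *\<^sub>R D k) k)"
    unfolding trace_def sum_Basis_prod
    by (simp add: ext_bracket_def inner_Pair_0 zero_prod_def)
  also have "\<dots> = \<mu> * y + trace (br0 u) + y * trace D"
    by (simp add: trace_def inner_add_left sum.distrib sum_distrib_left)
  finally show ?thesis .
qed

lemma bilinear_ext_bracket:
  fixes br0 :: "'a::real_inner \<Rightarrow> 'a \<Rightarrow> 'a"
  assumes B: "bilinear br0" and K: "linear K" and D: "linear D"
  shows "bilinear (ext_bracket br0 \<mu> b K D)"
proof -
  note lin = bilinear_radd[OF B] bilinear_rsub[OF B] bilinear_rmul[OF B]
    bilinear_ladd[OF B] bilinear_lsub[OF B] bilinear_lmul[OF B]
    linear_add[OF D] linear_diff[OF D] linear_scale[OF D]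
    linear_add[OF K] linear_diff[OF K] linear_scale[OF K]
    inner_add_right inner_diff_right inner_scaleR_right
    inner_add_left inner_diff_left inner_scaleR_left
  show ?thesis
    unfolding bilinear_def linear_iff
    by (simp add: split_paired_all ext_bracket_def lin algebra_simps)
qed

lemma ext_bracket_self:
  fixes br0 :: "'a::real_inner \<Rightarrow> 'a \<Rightarrow> 'a"
  assumes "\<And>u. br0 u u = 0" and "\<And>u. inner (K u) u = 0"
  shows "ext_bracket br0 \<mu> b K D p p = 0"
  using assms by (cases p) (simp add: ext_bracket_def zero_prod_def)

definition derivation_defect :: "('v::real_vector \<Rightarrow> 'v \<Rightarrow> 'v) \<Rightarrow> ('v \<Rightarrow> 'v) \<Rightarrow> 'v \<Rightarrow> 'v \<Rightarrow> 'v" where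
  "derivation_defect br0 D u v = D (br0 u v) - br0 u (D v) + br0 v (D u)"

definition compatibility_defect ::
  "('v::real_inner \<Rightarrow> 'v \<Rightarrow> 'v) \<Rightarrow> real \<Rightarrow> 'v \<Rightarrow> ('v \<Rightarrow> 'v) \<Rightarrow> ('v \<Rightarrow> 'v) \<Rightarrow> 'v \<Rightarrow> 'v \<Rightarrow> real" where
  "compatibility_defect br0 \<mu> b K D u v =
     \<mu> * inner (K u) v + inner b (br0 u v) - inner (K u) (D v) + inner (K v) (D u)"

lemma jacobiator_ext_bracket:
  fixes br0 :: "'a::real_inner \<Rightarrow> 'a \<Rightarrow> 'a"
  assumes B: "bilinear br0" and D: "linear D"
  shows "jacobiator (ext_bracket br0 \<mu> b K D) (x1, u1, y1) (x2, u2, y2) (x3, u3, y3) =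
    (inner (K u1) (br0 u2 u3) + inner (K u2) (br0 u3 u1) + inner (K u3) (br0 u1 u2)
       + y1 * compatibility_defect br0 \<mu> b K D u2 u3
       + y2 * compatibility_defect br0 \<mu> b K D u3 u1
       + y3 * compatibility_defect br0 \<mu> b K D u1 u2,
     jacobiator br0 u1 u2 u3
       + y1 *\<^sub>R derivation_defect br0 D u2 u3
       + y2 *\<^sub>R derivation_defect br0 D u3 u1
       + y3 *\<^sub>R derivation_defect br0 D u1 u2,
     0)"
proof -
  note lin = bilinear_radd[OF B] bilinear_rsub[OF B] bilinear_rmul[OF B]
    linear_add[OF D] linear_diff[OF D] linear_scale[OF D]
    inner_add_right inner_diff_right inner_scaleR_right
  show ?thesis
    unfolding jacobiator_def compatibility_defect_def derivation_defect_def
    by (simp add: ext_bracket_def lin) (simp add: algebra_simps)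
qed

lemma derivation_iff_defect_zero:
  assumes anticomm: "\<And>x y. br0 y x = - br0 x y" and D: "linear D"
  shows "derivation br0 D \<longleftrightarrow> (\<forall>u v. derivation_defect br0 D u v = 0)"
  using D by (simp add: derivation_def derivation_defect_def anticomm[of "D _"] algebra_simps)

lemma cocycle2_skew_iff:
  assumes K: "linear K" and skew: "\<And>u v. inner (K u) v = - inner u (K v)"
  shows "cocycle2 br0 (\<lambda>u v. inner (K u) v) \<longleftrightarrow>
    (\<forall>u1 u2 u3. inner (K u1) (br0 u2 u3) + inner (K u2) (br0 u3 u1) + inner (K u3) (br0 u1 u2) = 0)"
proof -
  have skew': "inner (K u) v = - inner (K v) u" for u v
    using skew[of u v] inner_commute[of u "K v"] by simp
  have bilinear: "bilinear (\<lambda>u v. inner (K u) v)"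
    unfolding bilinear_def linear_iff
    by (simp add: linear_add[OF K] linear_scale[OF K] inner_add_left inner_add_right)
  have alternating: "inner (K u) u = 0" for u
    using skew'[of u u] by simp
  have cyclic: "inner (K (br0 u v)) w + inner (K (br0 v w)) u + inner (K (br0 w u)) v =
      - (inner (K w) (br0 u v) + inner (K u) (br0 v w) + inner (K v) (br0 w u))" for u v w
    using skew'[of "br0 u v" w] skew'[of "br0 v w" u] skew'[of "br0 w u" v] by simp
  show ?thesis
    unfolding cocycle2_def cyclic neg_equal_0_iff_equal using bilinear alternating by blast
qed

lemma compatibility_defect_eq:
  fixes br0 :: "'a::euclidean_space \<Rightarrow> 'a \<Rightarrow> 'a"
  assumes B: "bilinear br0" and D: "linear D" and skew: "\<And>u v. inner (K u) v = - inner u (K v)"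
  shows "compatibility_defect br0 \<mu> b K D v w =
    inner (\<mu> *\<^sub>R K v + Jop br0 b v - K (D v) - adjoint D (K v)) w"
proof -
  have "linear (br0 v)"
    using B by (simp add: bilinear_def)
  then show ?thesis
    using skew[of "D v" w] inner_commute[of "D v" "K w"]
    by (simp add: compatibility_defect_def Jop_def inner_diff_left inner_add_left
        adjoint_clauses(2)[OF D] adjoint_clauses(2))
qed

lemma compatibility_iff_defect_zero:
  fixes br0 :: "'a::euclidean_space \<Rightarrow> 'a \<Rightarrow> 'a"
  assumes "bilinear br0" and "linear D" and "\<And>u v. inner (K u) v = - inner u (K v)"
  shows "(\<forall>v. K (D v) + adjoint D (K v) = \<mu> *\<^sub>R K v + Jop br0 b v) \<longleftrightarrow>
    (\<forall>v w. compatibility_defect br0 \<mu> b K D v w = 0)"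
proof -
  have orth: "(\<forall>w. inner x w = 0) \<longleftrightarrow> x = 0" for x :: 'a
    by (metis inner_eq_zero_iff inner_zero_left)
  have "K (D v) + adjoint D (K v) = \<mu> *\<^sub>R K v + Jop br0 b v \<longleftrightarrow>
      \<mu> *\<^sub>R K v + Jop br0 b v - K (D v) - adjoint D (K v) = 0" for v
    by (auto simp: algebra_simps)
  then show ?thesis
    by (simp add: compatibility_defect_eq[OF assms] orth)
qed

lemma lie_algebra_ext_bracket_iff:
  fixes br0 :: "'a::real_inner \<Rightarrow> 'a \<Rightarrow> 'a"
  assumes g0: "lie_algebra br0" and K: "linear K" and K_alt: "\<And>u. inner (K u) u = 0"
    and D: "linear D"
  shows "lie_algebra (ext_bracket br0 \<mu> b K D) \<longleftrightarrow>
    (\<forall>u v. derivation_defect br0 D u v = 0) \<and>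
    (\<forall>u1 u2 u3. inner (K u1) (br0 u2 u3) + inner (K u2) (br0 u3 u1) + inner (K u3) (br0 u1 u2) = 0) \<and>
    (\<forall>u v. compatibility_defect br0 \<mu> b K D u v = 0)"
    (is "_ \<longleftrightarrow> ?derivation \<and> ?cocycle \<and> ?compatible")
proof -
  have B: "bilinear br0" and alt0: "\<And>u. br0 u u = 0" and jac0: "\<And>u v w. jacobiator br0 u v w = 0"
    using g0 by (auto simp: lie_algebra_iff_jacobiator)
  note jac = jacobiator_ext_bracket[OF B D, where \<mu>=\<mu> and b=b and K=K]
  have "lie_algebra (ext_bracket br0 \<mu> b K D) \<longleftrightarrow>
      (\<forall>p q r. jacobiator (ext_bracket br0 \<mu> b K D) p q r = 0)"
    by (simp add: lie_algebra_iff_jacobiator bilinear_ext_bracket[OF B K D] ext_bracket_self alt0 K_alt)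
  also have "\<dots> \<longleftrightarrow> ?derivation \<and> ?cocycle \<and> ?compatible"
  proof
    assume J: "\<forall>p q r. jacobiator (ext_bracket br0 \<mu> b K D) p q r = 0"
    have cocycle: "inner (K u1) (br0 u2 u3) + inner (K u2) (br0 u3 u1) + inner (K u3) (br0 u1 u2) = 0"
      for u1 u2 u3
      using J[rule_format, of "(0, u1, 0)" "(0, u2, 0)" "(0, u3, 0)"] by (simp add: jac zero_prod_def)
    moreover have "derivation_defect br0 D u v = 0 \<and> compatibility_defect br0 \<mu> b K D u v = 0" for u v
      using J[rule_format, of "(0, 0, 1)" "(0, u, 0)" "(0, v, 0)"] cocycle[of 0 u v] jac0[of 0 u v]
      by (simp add: jac zero_prod_def)
    ultimately show "?derivation \<and> ?cocycle \<and> ?compatible"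
      by blast
  next
    assume "?derivation \<and> ?cocycle \<and> ?compatible"
    then show "\<forall>p q r. jacobiator (ext_bracket br0 \<mu> b K D) p q r = 0"
      by (simp add: split_paired_all jac jac0 zero_prod_def)
  qed
  finally show ?thesis .
qed

lemma trace_representative_ext_bracket:
  fixes br0 :: "'a::euclidean_space \<Rightarrow> 'a \<Rightarrow> 'a"
  assumes H: "\<forall>w. trace (ext_bracket br0 \<mu> b K D w) = lorentz_inner H w"
    and H0: "\<forall>v. trace (br0 v) = inner H0 v"
  shows "H = (\<mu> + trace D, H0, 0)"
proof -
  obtain h1 hu h2 where H_eq: "H = (h1, hu, h2)"
    by (cases H)
  have pairing: "\<mu> * y + inner H0 u + y * trace D = h1 * y + h2 * x + inner hu u" for x u y
    using H[rule_format, of "(x, u, y)"] H0 by (simp add: trace_ext_bracket H_eq lorentz_inner_def)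
  have "h2 = 0"
    using pairing[where x=1 and u=0 and y=0] by simp
  moreover have "h1 = \<mu> + trace D"
    using pairing[where x=0 and u=0 and y=1] by simp
  moreover have "H0 = hu"
    using pairing[where x=0 and y=0] vector_eq_rdot[of H0 hu] by simp
  ultimately show ?thesis
    by (simp add: H_eq)
qed

lemma unimodular_ext_bracket_iff:
  fixes br0 :: "'a::euclidean_space \<Rightarrow> 'a \<Rightarrow> 'a"
  assumes "bilinear br0"
  shows "unimodular (ext_bracket br0 \<mu> b K D) \<longleftrightarrow> unimodular br0 \<and> trace D = - \<mu>"
proof -
  have tr0: "trace (br0 0) = 0"
    by (simp add: trace_def bilinear_lzero[OF assms])
  have "(\<forall>u y. \<mu> * y + trace (br0 u) + y * trace D = 0) \<longleftrightarrow>
      (\<forall>u. trace (br0 u) = 0) \<and> trace D = - \<mu>"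
  proof
    assume h: "\<forall>u y. \<mu> * y + trace (br0 u) + y * trace D = 0"
    show "(\<forall>u. trace (br0 u) = 0) \<and> trace D = - \<mu>"
      using h[rule_format, where y=0] h[rule_format, where u=0 and y=1] tr0 by simp
  qed simp
  then show ?thesis
    by (simp add: unimodular_def split_paired_all trace_ext_bracket)
qed

theorem proposition4p1:
  fixes br0 :: "'a::euclidean_space \<Rightarrow> 'a \<Rightarrow> 'a"
    and \<mu> :: real and b :: 'a and K D :: "'a \<Rightarrow> 'a"
  assumes g0: "lie_algebra br0"
    and K_lin: "linear K" and K_skew: "\<forall>u v. inner (K u) v = - inner u (K v)"
    and D_lin: "linear D"
  shows "(lie_algebra (ext_bracket br0 \<mu> b K D) \<longleftrightarrow>
            derivation br0 D \<and> cocycle2 br0 (\<lambda>u v. inner (K u) v) \<and>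
            (\<forall>v. K (D v) + adjoint D (K v) = \<mu> *\<^sub>R K v + Jop br0 b v))
       \<and> (lie_algebra (ext_bracket br0 \<mu> b K D) \<longrightarrow>
            (\<forall>H H0. (\<forall>w. trace (ext_bracket br0 \<mu> b K D w) = lorentz_inner H w) \<longrightarrow>
                     (\<forall>v. trace (br0 v) = inner H0 v) \<longrightarrow>
                     H = (\<mu> + trace D, H0, 0))
          \<and> (unimodular (ext_bracket br0 \<mu> b K D) \<longleftrightarrow> unimodular br0 \<and> trace D = - \<mu>))"
proof -
  have B: "bilinear br0"
    using g0 by (simp add: lie_algebra_def)
  have skew: "\<And>u v. inner (K u) v = - inner u (K v)"
    using K_skew by blast
  have anticomm: "\<And>x y. br0 y x = - br0 x y"
    using lie_algebra_anticommute[OF g0] .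
  have K_alt: "inner (K u) u = 0" for u
    using skew[of u u] inner_commute[of u "K u"] by simp
  have "lie_algebra (ext_bracket br0 \<mu> b K D) \<longleftrightarrow>
      derivation br0 D \<and> cocycle2 br0 (\<lambda>u v. inner (K u) v) \<and>
      (\<forall>v. K (D v) + adjoint D (K v) = \<mu> *\<^sub>R K v + Jop br0 b v)"
    by (simp only: lie_algebra_ext_bracket_iff[OF g0 K_lin K_alt D_lin]
        derivation_iff_defect_zero[of br0, OF anticomm D_lin] cocycle2_skew_iff[OF K_lin skew]
        compatibility_iff_defect_zero[OF B D_lin skew])
  then show ?thesis
    using trace_representative_ext_bracket unimodular_ext_bracket_iff[OF B] by blast
qed

end
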